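(* Consider the tabular parametrization $\theta=\pi\in\Delta_{\mathcal A}^{\mathcal S}$, $\lambda(\theta)=\Lambda(\pi)$, and suppose $\xi_s>0$ for all $s$. Let $F$ be concave on an open neighbourhood of $\mathcal L$ and suppose $R(\pi):=F(\Lambda(\pi))$ is differentiable on $\Delta_{\mathcal A}^{\mathcal S}$ with $L$-Lipschitz gradient $\nabla_\pi R$. Let $\pi^*$ be a global maximizer of $R$ over $\Delta_{\mathcal A}^{\mathcal S}$, $\pi^0\in\Delta_{\mathcal A}^{\mathcal S}$, and $\pi^{k+1}=\mathrm{Proj}_{\Delta_{\mathcal A}^{\mathcal S}}\{\pi^k+\frac1L\nabla_\pi R(\pi^k)\}$. Then for all $k\ge1$, $$R(\pi^* )-R(\pi^k)\le\frac{20L|\mathcal S|}{(1-\gamma)^2(k+1)}\Big\|d^{\pi^*}_\xi/\xi\Big\|_\infty^2.$$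
   Context: Finite MDP with states $\mathcal S$, actions $\mathcal A$, transition matrices $P_a$, initial distribution $\xi$, discount $\gamma\in(0,1)$. $\Delta_{\mathcal A}^{\mathcal S}$ is the set of tabular policies ($\pi(\cdot|s)$ a probability distribution on $\mathcal A$ for each $s$). $\Lambda_{sa}(\pi)=\sum_{t\ge0}\gamma^t\mathbb P(s_t=s,a_t=a\mid\pi,s_0\sim\xi)$ is the occupancy measure, and $\mathcal L=\{\lambda\ge0:\sum_a(I-\gamma P_a^\top)\lambda_a=\xi\}=\Lambda(\Delta_{\mathcal A}^{\mathcal S})$. The discounted state visitation distribution is $d^\pi_\xi(s)=(1-\gamma)\sum_{t\ge0}\gamma^t\mathbb P(s_t=s\mid\pi,s_0\sim\xi)$; $d^{\pi^*}_\xi/\xi$ is the componentwise ratio. $\mathrm{Proj}$ is Euclidean projection. *)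

theory Defs
  imports "HOL-Analysis.Analysis"
begin

text \<open>Transition kernel P a s s' =
  probability of moving from s to s' under action a (so P_a is the matrix with rows s).
  A tabular policy is a vector \<pi> in real^('s x 'a), \<pi> $ (s,a) = \<pi>(a|s).\<close>

definition policies :: "(real^('s::finite \<times> 'a::finite)) set" where
  "policies = {\<pi>. (\<forall>s a. 0 \<le> \<pi> $ (s,a)) \<and> (\<forall>s. (\<Sum>a\<in>UNIV. \<pi> $ (s,a)) = 1)}"

text \<open>State distribution at time t: mu_t(s) = P(s_t = s | \<pi>, s_0 ~ xi).\<close>
primrec state_dist :: "('a::finite \<Rightarrow> 's::finite \<Rightarrow> 's \<Rightarrow> real) \<Rightarrow> ('s \<Rightarrow> real)
    \<Rightarrow> real^('s \<times> 'a) \<Rightarrow> nat \<Rightarrow> 's \<Rightarrow> real" where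
  "state_dist P xi \<pi> 0 = xi"
| "state_dist P xi \<pi> (Suc t) =
     (\<lambda>s'. \<Sum>s\<in>UNIV. \<Sum>a\<in>UNIV. state_dist P xi \<pi> t s * \<pi> $ (s,a) * P a s s')"

definition occupancy :: "('a::finite \<Rightarrow> 's::finite \<Rightarrow> 's \<Rightarrow> real) \<Rightarrow> ('s \<Rightarrow> real) \<Rightarrow> real
    \<Rightarrow> real^('s \<times> 'a) \<Rightarrow> real^('s \<times> 'a)" where
  "occupancy P xi \<gamma> \<pi> = (\<chi> i. (\<Sum>t. \<gamma> ^ t * (state_dist P xi \<pi> t (fst i) * \<pi> $ i)))"

definition visitation :: "('a::finite \<Rightarrow> 's::finite \<Rightarrow> 's \<Rightarrow> real) \<Rightarrow> ('s \<Rightarrow> real) \<Rightarrow> real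
    \<Rightarrow> real^('s \<times> 'a) \<Rightarrow> 's \<Rightarrow> real" where
  "visitation P xi \<gamma> \<pi> s = (1 - \<gamma>) * (\<Sum>t. \<gamma> ^ t * state_dist P xi \<pi> t s)"

definition occ_polytope :: "('a::finite \<Rightarrow> 's::finite \<Rightarrow> 's \<Rightarrow> real) \<Rightarrow> ('s \<Rightarrow> real) \<Rightarrow> real
    \<Rightarrow> (real^('s \<times> 'a)) set" where
  "occ_polytope P xi \<gamma> = {lam. (\<forall>i. 0 \<le> lam $ i) \<and>
     (\<forall>s'. (\<Sum>a\<in>UNIV. lam $ (s',a)) - \<gamma> * (\<Sum>s\<in>UNIV. \<Sum>a\<in>UNIV. P a s s' * lam $ (s,a)) = xi s')}"

end

theory Submission
  imports Defs
begin

text \<open>Two ingredients. First, projected gradient ascent with step \<open>1/L\<close> on a convex set of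
  diameter \<open>D\<close> increases \<open>R\<close> by at least \<open>L/2 |\<Delta>|\<^sup>2\<close> per step \<open>\<Delta>\<close>, and the new iterate
  \<open>x'\<close> is almost stationary: \<open>\<nabla>R(x') \<bullet> (q - x') \<le> 2 L D |\<Delta>|\<close> for every feasible \<open>q\<close>.
  Second, the tabular parametrisation satisfies gradient domination: pulling the occupancy
  segment from \<open>\<Lambda>(\<pi>)\<close> to \<open>\<Lambda>(\<pi>*)\<close> back to policies and using concavity of \<open>F\<close> there gives
  \<open>R(\<pi>*) - R(\<pi>) \<le> C \<cdot> sup {\<nabla>R(\<pi>) \<bullet> (\<pi>' - \<pi>) | \<pi>' policy}\<close> with
  \<open>C = max\<^sub>s (d(\<pi>*, s) / \<xi> s) / (1 - \<gamma>)\<close>. Together the optimality gaps satisfy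
  \<open>\<delta>(k+1)\<^sup>2 \<le> M (\<delta> k - \<delta> (k+1))\<close> with \<open>M = 8 L D\<^sup>2 C\<^sup>2\<close>, which forces
  \<open>\<delta> k \<le> 5 M / (4 (k + 1))\<close>; the policy polytope has \<open>D\<^sup>2 = 2 |S|\<close>.\<close>

lemma lipschitz_gradient_quadratic_lower_bound:
  fixes R :: "'v::real_inner \<Rightarrow> real" and G :: "'v \<Rightarrow> 'v"
  assumes S: "convex S" and x: "x \<in> S" and y: "y \<in> S"
    and der: "\<And>z. z \<in> S \<Longrightarrow> (R has_derivative (\<lambda>h. G z \<bullet> h)) (at z within S)"
    and lip: "L-lipschitz_on S G"
  shows "R x + G x \<bullet> (y - x) - L / 2 * (norm (y - x))^2 \<le> R y"
proof -
  define f where "f t = x + t *\<^sub>R (y - x)" for t :: real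
  define c where "c = G x \<bullet> (y - x)"
  define n2 where "n2 = (norm (y - x))^2"
  define \<psi> where "\<psi> t = R (f t) - t * c + L / 2 * t^2 * n2" for t
  have fS: "f t \<in> S" if "t \<in> {0..1}" for t
    using convexD_alt[OF S x y, of t] that by (simp add: f_def algebra_simps)
  have \<psi>_der: "(\<psi> has_derivative (\<lambda>h. (G (f t) \<bullet> (y - x) - c + L * t * n2) * h)) (at t within {0..1})"
    if t: "t \<in> {0..1}" for t
  proof -
    have f_der: "(f has_derivative (\<lambda>h. h *\<^sub>R (y - x))) (at t within {0..1})"
      unfolding f_def by (auto intro!: derivative_eq_intros)
    have "((\<lambda>t. R (f t)) has_derivative (\<lambda>h. G (f t) \<bullet> (h *\<^sub>R (y - x)))) (at t within {0..1})"
      by (rule has_derivative_in_compose2[of S R "\<lambda>z h. G z \<bullet> h", OF der _ t f_der]) (use fS in auto)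
    then show ?thesis unfolding \<psi>_def
      by (auto intro!: derivative_eq_intros simp: algebra_simps power2_eq_square)
  qed
  \<comment> \<open>The derivative of \<open>\<psi>\<close> is nonnegative because \<open>G\<close> moves by at most \<open>L t |y - x|\<close> along the segment.\<close>
  have "\<psi> 0 \<le> \<psi> 1"
  proof (rule DERIV_nonneg_imp_increasing_open[of 0 1])
    show "continuous_on {0..1} \<psi>"
      by (rule has_derivative_continuous_on) (rule \<psi>_der)
    fix t :: real assume t: "0 < t" "t < 1"
    have "(\<psi> has_real_derivative (G (f t) \<bullet> (y - x) - c + L * t * n2)) (at t)"
      using \<psi>_der[of t] t unfolding has_field_derivative_def
      by (simp add: at_within_Icc_at)
    moreover have "0 \<le> G (f t) \<bullet> (y - x) - c + L * t * n2"
    proof -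
      have "norm (G (f t) - G x) \<le> L * (t * norm (y - x))"
        using lipschitz_onD[OF lip fS[of t] x] t by (simp add: dist_norm f_def)
      then have "- ((G (f t) - G x) \<bullet> (y - x)) \<le> L * (t * norm (y - x)) * norm (y - x)"
        using Cauchy_Schwarz_ineq2[of "G (f t) - G x" "y - x"]
        by (smt (verit, best) mult_right_mono norm_ge_zero)
      then show ?thesis by (simp add: c_def n2_def inner_diff_left power2_eq_square)
    qed
    ultimately show "\<exists>y. (\<psi> has_real_derivative y) (at t) \<and> 0 \<le> y" by blast
  qed simp
  then show ?thesis by (simp add: \<psi>_def f_def c_def n2_def)
qed

lemma projected_gradient_step:
  fixes R :: "'v::{real_inner,heine_borel} \<Rightarrow> real" and G :: "'v \<Rightarrow> 'v"
  assumes S: "convex S" "closed S" and x: "x \<in> S"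
    and der: "\<And>z. z \<in> S \<Longrightarrow> (R has_derivative (\<lambda>h. G z \<bullet> h)) (at z within S)"
    and lip: "L-lipschitz_on S G" and L: "0 < L"
    and diam: "\<And>p q. p \<in> S \<Longrightarrow> q \<in> S \<Longrightarrow> norm (p - q) \<le> D"
    and x': "x' = closest_point S (x + (1 / L) *\<^sub>R G x)"
  shows projected_gradient_step_ascent: "L / 2 * (norm (x' - x))^2 \<le> R x' - R x"
    and projected_gradient_step_stationarity:
      "\<And>q. q \<in> S \<Longrightarrow> G x' \<bullet> (q - x') \<le> 2 * L * D * norm (x' - x)"
proof -
  have x'S: "x' \<in> S"
    unfolding x' using closest_point_in_set[OF S(2)] x by blast
  have opt: "G x \<bullet> (q - x') \<le> L * ((x' - x) \<bullet> (q - x'))" if q: "q \<in> S" for q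
  proof -
    have "(x + (1 / L) *\<^sub>R G x - x') \<bullet> (q - x') \<le> 0"
      unfolding x' by (rule closest_point_dot[OF S q])
    then have "(1 / L) * (G x \<bullet> (q - x')) \<le> (x' - x) \<bullet> (q - x')"
      by (simp add: inner_diff_left inner_add_left)
    then show ?thesis using L by (simp add: field_simps)
  qed
  have "L * (norm (x' - x))^2 \<le> G x \<bullet> (x' - x)"
  proof -
    have "(x - x') \<bullet> (x' - x) = - ((norm (x' - x))^2)" "G x \<bullet> (x - x') = - (G x \<bullet> (x' - x))"
      by (simp_all add: power2_norm_eq_inner inner_diff_left inner_diff_right inner_commute)
    then show ?thesis using opt[OF x] by (simp add: inner_commute)
  qed
  moreover have "R x + G x \<bullet> (x' - x) - L / 2 * (norm (x' - x))^2 \<le> R x'"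
    by (rule lipschitz_gradient_quadratic_lower_bound[OF S(1) x x'S der lip])
  ultimately show "L / 2 * (norm (x' - x))^2 \<le> R x' - R x" by simp
  fix q assume q: "q \<in> S"
  have "G x \<bullet> (q - x') \<le> L * (norm (x' - x) * D)"
    using opt[OF q] L norm_cauchy_schwarz[of "x' - x" "q - x'"] diam[OF q x'S]
    by (smt (verit) mult_left_mono norm_ge_zero)
  moreover have "(G x' - G x) \<bullet> (q - x') \<le> L * norm (x' - x) * D"
  proof -
    have "norm (G x' - G x) \<le> L * norm (x' - x)"
      using lipschitz_onD[OF lip x'S x] by (simp add: dist_norm)
    then show ?thesis
      using norm_cauchy_schwarz[of "G x' - G x" "q - x'"] diam[OF q x'S]
      by (smt (verit) mult_mono norm_ge_zero)
  qed
  ultimately show "G x' \<bullet> (q - x') \<le> 2 * L * D * norm (x' - x)"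
    by (simp add: inner_diff_left algebra_simps)
qed

lemma derivative_bound_from_scaled_directions:
  fixes R :: "'v::real_inner \<Rightarrow> real"
  assumes der: "(R has_derivative (\<lambda>h. g \<bullet> h)) (at x within S)" and K: "0 \<le> K"
    and dir: "\<And>\<alpha>. 0 < \<alpha> \<Longrightarrow> \<alpha> \<le> 1 \<Longrightarrow> \<exists>w. x + \<alpha> *\<^sub>R w \<in> S \<and> norm w \<le> K \<and> g \<bullet> w \<le> A
                  \<and> \<alpha> * \<delta> \<le> R (x + \<alpha> *\<^sub>R w) - R x"
  shows "\<delta> \<le> A"
proof (rule field_le_epsilon)
  fix e :: real assume e: "0 < e"
  have "0 < e / (K + 1)" using e K by simp
  then obtain d where d: "0 < d" and small: "\<And>y. y \<in> S \<Longrightarrow> norm (y - x) < d \<Longrightarrow>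
      norm (R y - R x - g \<bullet> (y - x)) \<le> e / (K + 1) * norm (y - x)"
    using der unfolding has_derivative_within_alt by blast
  define \<alpha> where "\<alpha> = min 1 (d / (K + 1))"
  have \<alpha>: "0 < \<alpha>" "\<alpha> \<le> 1" "\<alpha> * K < d"
  proof -
    show "0 < \<alpha>" "\<alpha> \<le> 1" using d K by (auto simp: \<alpha>_def)
    have "\<alpha> * K \<le> d / (K + 1) * K" unfolding \<alpha>_def by (intro mult_right_mono K min.cobounded2)
    also have "\<dots> < d" using d K by (simp add: field_simps)
    finally show "\<alpha> * K < d" .
  qed
  obtain w where w: "x + \<alpha> *\<^sub>R w \<in> S" "norm w \<le> K" "g \<bullet> w \<le> A"
    and gain: "\<alpha> * \<delta> \<le> R (x + \<alpha> *\<^sub>R w) - R x"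
    using dir[OF \<alpha>(1,2)] by blast
  have \<alpha>w: "norm (\<alpha> *\<^sub>R w) \<le> \<alpha> * K"
    using w(2) \<alpha>(1) by (simp add: mult_left_mono)
  have "R (x + \<alpha> *\<^sub>R w) - R x - \<alpha> * (g \<bullet> w) \<le> e / (K + 1) * norm (\<alpha> *\<^sub>R w)"
    using small[OF w(1)] \<alpha>w \<alpha>(3) by simp
  also have "\<dots> \<le> e / (K + 1) * (\<alpha> * K)"
    using \<alpha>w e K by (intro mult_left_mono) auto
  also have "\<dots> = \<alpha> * e * (K / (K + 1))"
    by simp
  also have "\<dots> \<le> \<alpha> * e"
    using \<alpha>(1) e K by (intro mult_left_le) auto
  finally have "\<alpha> * \<delta> \<le> \<alpha> * (A + e)"
    using gain w(3) \<alpha>(1) by (smt (verit) distrib_left mult_left_mono)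
  then show "\<delta> \<le> A + e" using \<alpha>(1) by simp
qed

lemma quadratic_decrease_rate_step:
  fixes N :: real assumes N: "3 \<le> N"
  shows "5 / (4 * (N + 1)) \<le> (5 / (4 * (N + 2)))^2 + 5 / (4 * (N + 2))"
proof -
  define a where "a = 5 / (4 * (N + 2))"
  have "5 / (4 * (N + 1)) = a + a * (1 / (N + 1))"
    using N unfolding a_def by (simp add: divide_simps) (simp add: algebra_simps)
  moreover have "a * (1 / (N + 1)) \<le> a * a"
    using N unfolding a_def by (intro mult_left_mono) (simp_all add: divide_simps)
  ultimately show ?thesis by (simp add: a_def power2_eq_square)
qed

lemma quadratic_decrease_rate:
  fixes d :: "nat \<Rightarrow> real"
  assumes M: "0 < M"
    and decrease: "\<And>n. (d (Suc n))^2 \<le> M * (d n - d (Suc n))"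
    and d1: "d 1 \<le> M / 4" and k: "1 \<le> k"
  shows "d k \<le> 5 * M / (4 * (real k + 1))"
proof -
  have "decseq d"
  proof (rule decseq_SucI)
    fix n
    have "0 \<le> M * (d n - d (Suc n))" using decrease[of n] by (smt (verit) zero_le_power2)
    then show "d (Suc n) \<le> d n" using M by (simp add: zero_le_mult_iff)
  qed
  then have le_d1: "d j \<le> d 1" if "1 \<le> j" for j
    using that by (simp add: decseqD)
  show ?thesis
  proof (cases "k \<le> 3")
    case True
    have "M / 4 \<le> 5 * M / (4 * (real k + 1))" using True M by (simp add: field_simps)
    then show ?thesis using le_d1[OF k] d1 by linarith
  next
    case False
    then have "3 \<le> k" by simp
    then show ?thesis
    proof (induction k rule: dec_induct)
      case base
      show ?case using le_d1[of 3] d1 M by simp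
    next
      case (step n)
      define a where "a = 5 / (4 * (real n + 2))"
      define x where "x = d (Suc n)"
      \<comment> \<open>\<open>x\<^sup>2 + M x\<close> is increasing in \<open>x \<ge> 0\<close> and at most \<open>M d n \<le> (M a)\<^sup>2 + M (M a)\<close>.\<close>
      have "x^2 + M * x \<le> M * (5 * M / (4 * (real n + 1)))"
        using decrease[of n] mult_left_mono[OF step.IH, of M] M by (simp add: x_def algebra_simps)
      also have "\<dots> = M * M * (5 / (4 * (real n + 1)))"
        by simp
      also have "\<dots> \<le> M * M * (a^2 + a)"
        using quadratic_decrease_rate_step[of "real n"] step.hyps(1) unfolding a_def
        by (intro mult_left_mono) auto
      finally have x: "x^2 + M * x \<le> (M * a)^2 + M * (M * a)"
        by (simp add: power2_eq_square algebra_simps)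
      have "x \<le> M * a"
      proof (rule ccontr)
        assume "\<not> x \<le> M * a"
        moreover have "0 \<le> M * a" using M by (simp add: a_def)
        ultimately have "(M * a)^2 < x^2" "M * (M * a) < M * x"
          using M by (auto intro: power_strict_mono)
        then show False using x by linarith
      qed
      then show ?case by (simp add: x_def a_def field_simps)
    qed
  qed
qed

theorem projected_gradient_ascent_rate:
  fixes R :: "'v::{real_inner,heine_borel} \<Rightarrow> real" and G :: "'v \<Rightarrow> 'v" and x :: "nat \<Rightarrow> 'v"
  assumes S: "convex S" "closed S"
    and der: "\<And>z. z \<in> S \<Longrightarrow> (R has_derivative (\<lambda>h. G z \<bullet> h)) (at z within S)"
    and lip: "L-lipschitz_on S G" and L: "0 < L"
    and diam: "\<And>p q. p \<in> S \<Longrightarrow> q \<in> S \<Longrightarrow> norm (p - q) \<le> D" and D: "0 < D"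
    and max: "\<And>z. z \<in> S \<Longrightarrow> R z \<le> R xstar"
    and dominated: "\<And>z B. z \<in> S \<Longrightarrow> (\<And>q. q \<in> S \<Longrightarrow> G z \<bullet> (q - z) \<le> B) \<Longrightarrow> R xstar - R z \<le> C * B"
    and C: "1 \<le> C"
    and x0: "x 0 \<in> S"
    and step: "\<And>n. x (Suc n) = closest_point S (x n + (1 / L) *\<^sub>R G (x n))"
    and k: "1 \<le> k"
  shows "R xstar - R (x k) \<le> 10 * L * D^2 * C^2 / (real k + 1)"
proof -
  have xS: "x n \<in> S" for n
    by (induction n) (use x0 closest_point_in_set[OF S(2)] step in auto)
  define \<delta> where "\<delta> n = R xstar - R (x n)" for n
  define \<Delta> where "\<Delta> n = norm (x (Suc n) - x n)" for n
  define M where "M = 8 * L * D^2 * C^2"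
  have ascent: "L / 2 * (\<Delta> n)^2 \<le> \<delta> n - \<delta> (Suc n)" for n
    using projected_gradient_step_ascent[OF S xS der lip L diam step] unfolding \<delta>_def \<Delta>_def by simp
  have gap: "\<delta> (Suc n) \<le> C * (2 * L * D * \<Delta> n)" for n
    unfolding \<delta>_def \<Delta>_def
    by (rule dominated[OF xS projected_gradient_step_stationarity[OF S xS der lip L diam step]])
  have decrease: "(\<delta> (Suc n))^2 \<le> M * (\<delta> n - \<delta> (Suc n))" for n
  proof -
    have "(\<delta> (Suc n))^2 \<le> (C * (2 * L * D * \<Delta> n))^2"
      using gap[of n] max[OF xS] by (intro power_mono) (auto simp: \<delta>_def)
    also have "\<dots> = 8 * L * D^2 * C^2 * (L / 2 * (\<Delta> n)^2)"
      by (simp add: power2_eq_square)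
    also have "\<dots> \<le> M * (\<delta> n - \<delta> (Suc n))"
      unfolding M_def using ascent[of n] L by (intro mult_left_mono) auto
    finally show ?thesis .
  qed
  have initial: "\<delta> 1 \<le> M / 4"
  proof -
    have "\<Delta> 0 \<le> D" using diam[OF xS xS] by (simp add: \<Delta>_def)
    then have "C * (2 * L * D * \<Delta> 0) \<le> C * (2 * L * D * D)"
      using C L D by (intro mult_left_mono) auto
    then have "\<delta> 1 \<le> C * (2 * L * D * D)"
      using gap[of 0] by (simp only: One_nat_def)
    also have "\<dots> \<le> C^2 * (2 * L * D * D)"
      using C L D by (intro mult_right_mono) (auto simp: power2_eq_square)
    also have "\<dots> = M / 4"
      by (simp add: M_def power2_eq_square)
    finally show ?thesis .
  qed
  have "0 < M" using L D C by (simp add: M_def)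
  then have "\<delta> k \<le> 5 * M / (4 * (real k + 1))"
    by (rule quadratic_decrease_rate[OF _ decrease initial k])
  also have "\<dots> = 10 * L * D^2 * C^2 / (real k + 1)"
    by (simp add: M_def divide_simps)
  finally show ?thesis by (simp add: \<delta>_def)
qed

lemma sum_UNIV_pairs:
  "(\<Sum>i\<in>(UNIV::('s::finite \<times> 'a::finite) set). f i) = (\<Sum>s\<in>UNIV. \<Sum>a\<in>UNIV. f (s, a))"
  using sum.cartesian_product[of "\<lambda>s a. f (s, a)" UNIV UNIV] by simp

lemma sum_swap_outermost:
  "(\<Sum>z\<in>C. \<Sum>x\<in>A. \<Sum>y\<in>B. f x y z) = (\<Sum>x\<in>A. \<Sum>y\<in>B. \<Sum>z\<in>C. (f x y z :: real))"
  by (subst sum.swap) (simp only: sum.swap[of _ C B])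

lemma inner_pairs:
  "(x::real^('s::finite \<times> 'a::finite)) \<bullet> y = (\<Sum>s\<in>UNIV. \<Sum>a\<in>UNIV. x $ (s, a) * y $ (s, a))"
  by (simp add: inner_vec_def sum_UNIV_pairs)

lemma policiesD:
  assumes "\<pi> \<in> policies"
  shows policies_nonneg: "0 \<le> \<pi> $ (s, a)" and policies_row_sum: "(\<Sum>a\<in>UNIV. \<pi> $ (s, a)) = 1"
  using assms by (auto simp: policies_def)

lemma policies_le_1:
  assumes "\<pi> \<in> policies" shows "\<pi> $ (s, a) \<le> 1"
proof -
  have "\<pi> $ (s, a) \<le> (\<Sum>b\<in>UNIV. \<pi> $ (s, b))"
    by (rule member_le_sum) (auto simp: policies_nonneg[OF assms])
  then show ?thesis using policies_row_sum[OF assms] by simp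
qed

lemma closed_policies: "closed (policies :: (real^('s::finite \<times> 'a::finite)) set)"
proof -
  have "policies = (\<Inter>i. {\<pi>::real^('s \<times> 'a). 0 \<le> \<pi> $ i}) \<inter> (\<Inter>s. {\<pi>. (\<Sum>a\<in>UNIV. \<pi> $ (s, a)) = 1})"
    by (auto simp: policies_def)
  also have "closed \<dots>"
    by (intro closed_Int closed_INT ballI closed_Collect_le closed_Collect_eq continuous_intros)
  finally show ?thesis .
qed

lemma convex_policies: "convex (policies :: (real^('s::finite \<times> 'a::finite)) set)"
  unfolding convex_def policies_def
  by (auto simp: sum.distrib sum_distrib_left[symmetric])

lemma policies_diameter:
  fixes p q :: "real^('s::finite \<times> 'a::finite)"
  assumes "p \<in> policies" "q \<in> policies"
  shows "norm (p - q) \<le> sqrt (2 * real CARD('s))"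
proof (rule real_le_rsqrt)
  have sq: "(u - v)^2 \<le> u + v" if "0 \<le> u" "u \<le> 1" "0 \<le> v" "v \<le> 1" for u v :: real
  proof -
    have "(u - v)^2 = u * u + v * v - 2 * (u * v)" by (simp add: power2_eq_square algebra_simps)
    then show ?thesis
      using mult_left_le[of u u] mult_left_le[of v v] mult_nonneg_nonneg[OF that(1,3)] that by linarith
  qed
  have "(norm (p - q))^2 = (\<Sum>s\<in>UNIV. \<Sum>a\<in>UNIV. (p $ (s, a) - q $ (s, a))^2)"
    by (simp only: power2_norm_eq_inner inner_pairs) (simp add: power2_eq_square)
  also have "\<dots> \<le> (\<Sum>s\<in>(UNIV::'s set). \<Sum>a\<in>UNIV. p $ (s, a) + q $ (s, a))"
    using assms by (intro sum_mono sq policies_nonneg policies_le_1)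
  also have "\<dots> = 2 * real CARD('s)"
    using assms by (simp add: sum.distrib policies_row_sum)
  finally show "(norm (p - q))^2 \<le> 2 * real CARD('s)" .
qed

lemma inner_scaled_policy_diff_le:
  fixes g p q :: "real^('s::finite \<times> 'a::finite)" and r :: "'s \<Rightarrow> real"
  assumes p: "p \<in> policies" and q: "q \<in> policies"
    and r: "\<And>s. 0 \<le> r s" "\<And>s. r s \<le> C"
    and B: "\<And>p'. p' \<in> policies \<Longrightarrow> g \<bullet> (p' - p) \<le> B"
  shows "g \<bullet> (\<chi> i. r (fst i) * (q $ i - p $ i)) \<le> C * B"
proof -
  define h where "h s = (\<Sum>a\<in>UNIV. g $ (s, a) * (q $ (s, a) - p $ (s, a)))" for s
  \<comment> \<open>Test \<open>B\<close> on the policy that follows \<open>q\<close> in the states where this gains and \<open>p\<close> elsewhere.\<close>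
  define p' :: "real^('s \<times> 'a)" where "p' = (\<chi> i. if 0 < h (fst i) then q $ i else p $ i)"
  have "(\<Sum>a\<in>UNIV. if 0 < h s then q $ (s, a) else p $ (s, a)) = 1" for s
    by (cases "0 < h s") (simp_all add: policies_row_sum[OF p] policies_row_sum[OF q])
  then have "p' \<in> policies"
    using p q unfolding policies_def p'_def by auto
  moreover have "g \<bullet> (p' - p) = (\<Sum>s\<in>UNIV. max (h s) 0)"
    unfolding inner_pairs h_def p'_def by (intro sum.cong refl) (auto simp: max_def)
  ultimately have hB: "(\<Sum>s\<in>UNIV. max (h s) 0) \<le> B" using B by metis
  have "g \<bullet> (\<chi> i. r (fst i) * (q $ i - p $ i)) = (\<Sum>s\<in>UNIV. r s * h s)"
    unfolding inner_pairs h_def by (simp add: sum_distrib_left algebra_simps)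
  also have "\<dots> \<le> (\<Sum>s\<in>UNIV. C * max (h s) 0)"
  proof (rule sum_mono)
    fix s
    have "r s * h s \<le> r s * max (h s) 0" using r(1)[of s] by (intro mult_left_mono) auto
    also have "\<dots> \<le> C * max (h s) 0" using r(2)[of s] by (intro mult_right_mono) auto
    finally show "r s * h s \<le> C * max (h s) 0" .
  qed
  also have "\<dots> \<le> C * B"
    using hB r order.trans[OF r(1) r(2)] by (simp add: sum_distrib_left[symmetric] mult_left_mono)
  finally show ?thesis .
qed

lemma norm_scaled_policy_diff_le:
  fixes p q :: "real^('s::finite \<times> 'a::finite)" and r :: "'s \<Rightarrow> real"
  assumes p: "p \<in> policies" and q: "q \<in> policies"
    and r: "\<And>s. 0 \<le> r s" "\<And>s. r s \<le> C"
  shows "norm (\<chi> i. r (fst i) * (q $ i - p $ i)) \<le> C * real CARD('s \<times> 'a)"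
proof -
  define v :: "real^('s \<times> 'a)" where "v = (\<chi> i. r (fst i) * (q $ i - p $ i))"
  have "\<bar>v $ i\<bar> \<le> C" for i
  proof -
    obtain s a where i: "i = (s, a)" by (cases i)
    have "\<bar>q $ i - p $ i\<bar> \<le> 1"
      using policies_nonneg[OF p, of s a] policies_nonneg[OF q, of s a]
        policies_le_1[OF p, of s a] policies_le_1[OF q, of s a]
      unfolding i abs_le_iff by linarith
    then show ?thesis
      using r[of s] mult_left_le[of "\<bar>q $ i - p $ i\<bar>" "r s"] by (simp add: v_def i abs_mult)
  qed
  then have "(\<Sum>i\<in>UNIV. \<bar>v $ i\<bar>) \<le> C * real CARD('s \<times> 'a)"
    using sum_mono[of UNIV "\<lambda>i. \<bar>v $ i\<bar>" "\<lambda>_. C"] by (simp add: mult_ac)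
  then show ?thesis using norm_le_l1_cart[of v] unfolding v_def by linarith
qed

definition row_sum :: "real^('s::finite \<times> 'a::finite) \<Rightarrow> 's \<Rightarrow> real" where
  "row_sum l s = (\<Sum>a\<in>UNIV. l $ (s, a))"

definition policy_of :: "real^('s::finite \<times> 'a::finite) \<Rightarrow> real^('s \<times> 'a)" where
  "policy_of l = (\<chi> i. l $ i / row_sum l (fst i))"

lemma occ_polytope_nonneg: "l \<in> occ_polytope P xi \<gamma> \<Longrightarrow> 0 \<le> l $ i"
  by (cases i) (auto simp: occ_polytope_def)

lemma occ_polytope_row_sum:
  "l \<in> occ_polytope P xi \<gamma> \<Longrightarrow>
    row_sum l s' = xi s' + \<gamma> * (\<Sum>s\<in>UNIV. \<Sum>a\<in>UNIV. P a s s' * l $ (s, a))"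
  by (auto simp: occ_polytope_def row_sum_def algebra_simps)

lemma convex_occ_polytope: "convex (occ_polytope P xi \<gamma>)"
proof (rule convexI)
  fix x y and u v :: real
  assume x: "x \<in> occ_polytope P xi \<gamma>" and y: "y \<in> occ_polytope P xi \<gamma>"
    and uv: "0 \<le> u" "0 \<le> v" "u + v = 1"
  have "row_sum (u *\<^sub>R x + v *\<^sub>R y) s' = u * row_sum x s' + v * row_sum y s'"
    and "(\<Sum>s\<in>UNIV. \<Sum>a\<in>UNIV. P a s s' * (u *\<^sub>R x + v *\<^sub>R y) $ (s, a))
        = u * (\<Sum>s\<in>UNIV. \<Sum>a\<in>UNIV. P a s s' * x $ (s, a)) + v * (\<Sum>s\<in>UNIV. \<Sum>a\<in>UNIV. P a s s' * y $ (s, a))"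
    for s'
    by (simp_all add: row_sum_def sum.distrib sum_distrib_left algebra_simps)
  then show "u *\<^sub>R x + v *\<^sub>R y \<in> occ_polytope P xi \<gamma>"
    using occ_polytope_nonneg[OF x] occ_polytope_nonneg[OF y] uv
      occ_polytope_row_sum[OF x] occ_polytope_row_sum[OF y]
    unfolding occ_polytope_def row_sum_def[symmetric]
    by (simp add: algebra_simps) (metis distrib_right mult_1)
qed

locale mdp =
  fixes P :: "'a::finite \<Rightarrow> 's::finite \<Rightarrow> 's \<Rightarrow> real" and xi :: "'s \<Rightarrow> real" and \<gamma> :: real
  assumes P_nonneg: "\<And>a s s'. 0 \<le> P a s s'"
    and P_stoch: "\<And>a s. (\<Sum>s'\<in>UNIV. P a s s') = 1"
    and xi_pos: "\<And>s. 0 < xi s"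
    and xi_sum: "(\<Sum>s\<in>UNIV. xi s) = 1"
    and gamma: "0 < \<gamma>" "\<gamma> < 1"
begin

abbreviation mu where "mu \<pi> t s \<equiv> state_dist P xi \<pi> t s"

definition state_occupancy :: "real^('s \<times> 'a) \<Rightarrow> 's \<Rightarrow> real" where
  "state_occupancy \<pi> s = (\<Sum>t. \<gamma> ^ t * mu \<pi> t s)"

lemma state_dist_nonneg: "\<pi> \<in> policies \<Longrightarrow> 0 \<le> mu \<pi> t s"
  by (induction t arbitrary: s)
    (auto intro!: sum_nonneg mult_nonneg_nonneg P_nonneg policies_nonneg less_imp_le[OF xi_pos])

lemma state_dist_sum: "\<pi> \<in> policies \<Longrightarrow> (\<Sum>s\<in>UNIV. mu \<pi> t s) = 1"
proof (induction t)
  case 0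
  then show ?case using xi_sum by simp
next
  case (Suc t)
  have "(\<Sum>s'\<in>UNIV. mu \<pi> (Suc t) s') = (\<Sum>s\<in>UNIV. \<Sum>a\<in>UNIV. \<Sum>s'\<in>UNIV. mu \<pi> t s * \<pi> $ (s, a) * P a s s')"
    by (simp only: state_dist.simps(2)) (rule sum_swap_outermost)
  also have "\<dots> = (\<Sum>s\<in>UNIV. mu \<pi> t s)"
    using policies_row_sum[OF Suc.prems] by (simp add: sum_distrib_left[symmetric] P_stoch)
  finally show ?case using Suc by simp
qed

lemma state_dist_le_1:
  assumes "\<pi> \<in> policies" shows "mu \<pi> t s \<le> 1"
proof -
  have "mu \<pi> t s \<le> (\<Sum>s\<in>UNIV. mu \<pi> t s)"
    by (intro member_le_sum state_dist_nonneg assms) auto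
  then show ?thesis using state_dist_sum[OF assms] by simp
qed

lemma state_occupancy_sums:
  assumes "\<pi> \<in> policies" shows "(\<lambda>t. \<gamma> ^ t * mu \<pi> t s) sums state_occupancy \<pi> s"
proof -
  have "summable (\<lambda>t. \<gamma> ^ t * mu \<pi> t s)"
  proof (rule summable_comparison_test)
    show "\<exists>N. \<forall>n\<ge>N. norm (\<gamma> ^ n * mu \<pi> n s) \<le> \<gamma> ^ n"
      using state_dist_nonneg[OF assms] state_dist_le_1[OF assms] gamma
      by (auto intro!: mult_left_le simp: abs_mult)
    show "summable (\<lambda>n. \<gamma> ^ n)" using gamma by (auto intro!: summable_geometric)
  qed
  then show ?thesis unfolding state_occupancy_def by (simp add: summable_sums)
qed

lemma state_occupancy_nonneg: "\<pi> \<in> policies \<Longrightarrow> 0 \<le> state_occupancy \<pi> s"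
  unfolding state_occupancy_def using state_occupancy_sums[of \<pi> s] state_dist_nonneg[of \<pi>] gamma
  by (intro suminf_nonneg) (auto simp: sums_iff)

lemma occupancy_eq:
  "\<pi> \<in> policies \<Longrightarrow> occupancy P xi \<gamma> \<pi> $ (s, a) = state_occupancy \<pi> s * \<pi> $ (s, a)"
  using sums_mult2[OF state_occupancy_sums, of \<pi> s "\<pi> $ (s, a)"]
  by (simp add: occupancy_def sums_iff mult.assoc)

lemma visitation_eq: "visitation P xi \<gamma> \<pi> s = (1 - \<gamma>) * state_occupancy \<pi> s"
  by (simp add: visitation_def state_occupancy_def)

lemma state_occupancy_bellman:
  assumes "\<pi> \<in> policies"
  shows "state_occupancy \<pi> s' =
    xi s' + \<gamma> * (\<Sum>s\<in>UNIV. \<Sum>a\<in>UNIV. state_occupancy \<pi> s * \<pi> $ (s, a) * P a s s')"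
proof -
  define next_term where "next_term t = \<gamma> ^ Suc t * mu \<pi> (Suc t) s'" for t
  have "next_term = (\<lambda>t. \<gamma> * (\<Sum>s\<in>UNIV. \<Sum>a\<in>UNIV. \<gamma> ^ t * mu \<pi> t s * (\<pi> $ (s, a) * P a s s')))"
    by (simp add: next_term_def fun_eq_iff sum_distrib_left mult.assoc mult.left_commute)
  also have "\<dots> sums (\<gamma> * (\<Sum>s\<in>UNIV. \<Sum>a\<in>UNIV. state_occupancy \<pi> s * (\<pi> $ (s, a) * P a s s')))"
    by (intro sums_mult sums_sum sums_mult2 state_occupancy_sums assms)
  finally have "(\<lambda>t. \<gamma> ^ t * mu \<pi> t s') sums
      (\<gamma> * (\<Sum>s\<in>UNIV. \<Sum>a\<in>UNIV. state_occupancy \<pi> s * (\<pi> $ (s, a) * P a s s')) + xi s')"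
    using sums_Suc_iff[of "\<lambda>t. \<gamma> ^ t * mu \<pi> t s'"] unfolding next_term_def by simp
  then show ?thesis
    using sums_unique2[OF _ state_occupancy_sums[OF assms]] by (simp add: mult.assoc)
qed

lemma state_occupancy_ge_xi: "\<pi> \<in> policies \<Longrightarrow> xi s \<le> state_occupancy \<pi> s"
  using state_occupancy_bellman[of \<pi> s] gamma
  by (simp add: sum_nonneg mult_nonneg_nonneg P_nonneg policies_nonneg state_occupancy_nonneg)

lemma state_occupancy_ratio_le:
  "state_occupancy \<pi> s / xi s \<le> Max (range (\<lambda>s. \<bar>visitation P xi \<gamma> \<pi> s / xi s\<bar>)) / (1 - \<gamma>)"
proof -
  have "state_occupancy \<pi> s / xi s = visitation P xi \<gamma> \<pi> s / xi s / (1 - \<gamma>)"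
    using gamma by (simp add: visitation_eq)
  also have "\<dots> \<le> Max (range (\<lambda>s. \<bar>visitation P xi \<gamma> \<pi> s / xi s\<bar>)) / (1 - \<gamma>)"
    using gamma by (intro divide_right_mono order.trans[OF abs_ge_self Max_ge]) auto
  finally show ?thesis .
qed

lemma occupancy_in_occ_polytope:
  assumes "\<pi> \<in> policies" shows "occupancy P xi \<gamma> \<pi> \<in> occ_polytope P xi \<gamma>"
  unfolding occ_polytope_def
proof (intro CollectI conjI allI)
  fix i :: "'s \<times> 'a"
  show "0 \<le> occupancy P xi \<gamma> \<pi> $ i"
    using state_occupancy_nonneg[OF assms] policies_nonneg[OF assms]
    by (cases i) (simp add: occupancy_eq[OF assms])
next
  fix s'
  have "(\<Sum>a\<in>UNIV. occupancy P xi \<gamma> \<pi> $ (s', a)) = state_occupancy \<pi> s'"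
    using policies_row_sum[OF assms] by (simp add: occupancy_eq[OF assms] sum_distrib_left[symmetric])
  moreover have "(\<Sum>s\<in>UNIV. \<Sum>a\<in>UNIV. P a s s' * occupancy P xi \<gamma> \<pi> $ (s, a))
     = (\<Sum>s\<in>UNIV. \<Sum>a\<in>UNIV. state_occupancy \<pi> s * \<pi> $ (s, a) * P a s s')"
    by (simp add: occupancy_eq[OF assms] mult.commute)
  ultimately show "(\<Sum>a\<in>UNIV. occupancy P xi \<gamma> \<pi> $ (s', a)) -
      \<gamma> * (\<Sum>s\<in>UNIV. \<Sum>a\<in>UNIV. P a s s' * occupancy P xi \<gamma> \<pi> $ (s, a)) = xi s'"
    using state_occupancy_bellman[OF assms, of s'] by simp
qed

lemma row_sum_ge_xi: "l \<in> occ_polytope P xi \<gamma> \<Longrightarrow> xi s \<le> row_sum l s"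
  using occ_polytope_row_sum[of l P xi \<gamma> s] gamma
  by (simp add: sum_nonneg mult_nonneg_nonneg P_nonneg occ_polytope_nonneg)

lemma row_sum_pos: "l \<in> occ_polytope P xi \<gamma> \<Longrightarrow> 0 < row_sum l s"
  using row_sum_ge_xi[of l s] xi_pos[of s] by linarith

lemma policy_of_in_policies:
  assumes l: "l \<in> occ_polytope P xi \<gamma>" shows "policy_of l \<in> policies"
proof -
  have "(\<Sum>a\<in>UNIV. l $ (s, a) / row_sum l s) = 1" for s
    using row_sum_pos[OF l, of s] unfolding row_sum_def by (simp add: sum_divide_distrib[symmetric])
  then show ?thesis
    unfolding policies_def policy_of_def
    using occ_polytope_nonneg[OF l] row_sum_pos[OF l] by (auto intro: divide_nonneg_pos)
qed

lemma discounted_fixpoint_eq_zero: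
  assumes \<pi>: "\<pi> \<in> policies"
    and e: "\<And>s'. e s' = \<gamma> * (\<Sum>s\<in>UNIV. \<Sum>a\<in>UNIV. e s * \<pi> $ (s, a) * P a s s')"
  shows "e s = 0"
proof -
  \<comment> \<open>The map \<open>e \<mapsto> \<gamma> P\<^sub>\<pi>\<^sup>T e\<close> is a \<open>\<gamma>\<close>-contraction in the \<open>\<ell>\<^sub>1\<close> norm.\<close>
  have "(\<Sum>s'\<in>UNIV. \<bar>e s'\<bar>) \<le> (\<Sum>s'\<in>UNIV. \<gamma> * (\<Sum>s\<in>UNIV. \<Sum>a\<in>UNIV. \<bar>e s\<bar> * \<pi> $ (s, a) * P a s s'))"
  proof (rule sum_mono)
    fix s'
    have "\<bar>e s'\<bar> = \<gamma> * \<bar>\<Sum>s\<in>UNIV. \<Sum>a\<in>UNIV. e s * \<pi> $ (s, a) * P a s s'\<bar>"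
      using e[of s'] gamma by (simp add: abs_mult)
    also have "\<dots> \<le> \<gamma> * (\<Sum>s\<in>UNIV. \<Sum>a\<in>UNIV. \<bar>e s * \<pi> $ (s, a) * P a s s'\<bar>)"
      using gamma by (intro mult_left_mono order.trans[OF sum_abs] sum_mono sum_abs) auto
    also have "\<dots> = \<gamma> * (\<Sum>s\<in>UNIV. \<Sum>a\<in>UNIV. \<bar>e s\<bar> * \<pi> $ (s, a) * P a s s')"
      using policies_nonneg[OF \<pi>] P_nonneg by (simp add: abs_mult)
    finally show "\<bar>e s'\<bar> \<le> \<gamma> * (\<Sum>s\<in>UNIV. \<Sum>a\<in>UNIV. \<bar>e s\<bar> * \<pi> $ (s, a) * P a s s')" .
  qed
  also have "\<dots> = \<gamma> * (\<Sum>s\<in>UNIV. \<Sum>a\<in>UNIV. \<Sum>s'\<in>UNIV. \<bar>e s\<bar> * \<pi> $ (s, a) * P a s s')"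
    by (simp add: sum_distrib_left[symmetric] sum_swap_outermost)
  also have "\<dots> = \<gamma> * (\<Sum>s\<in>UNIV. \<bar>e s\<bar>)"
    using policies_row_sum[OF \<pi>] by (simp add: sum_distrib_left[symmetric] P_stoch)
  finally have "(1 - \<gamma>) * (\<Sum>s\<in>UNIV. \<bar>e s\<bar>) \<le> 0"
    by (simp add: algebra_simps)
  then have "(\<Sum>s\<in>UNIV. \<bar>e s\<bar>) \<le> 0"
    using gamma by (simp add: mult_le_0_iff)
  then have "(\<Sum>s\<in>UNIV. \<bar>e s\<bar>) = 0" by (meson abs_ge_zero antisym sum_nonneg)
  then show ?thesis by (simp add: sum_nonneg_eq_0_iff)
qed

lemma state_occupancy_policy_of:
  assumes l: "l \<in> occ_polytope P xi \<gamma>" shows "state_occupancy (policy_of l) s = row_sum l s"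
proof -
  \<comment> \<open>\<open>row_sum l\<close> solves the same discounted balance equation as the state occupancy of \<open>policy_of l\<close>.\<close>
  let ?\<pi> = "policy_of l"
  have \<pi>: "?\<pi> \<in> policies" by (rule policy_of_in_policies[OF l])
  have l_eq: "l $ (s, a) = row_sum l s * ?\<pi> $ (s, a)" for s a
    using row_sum_pos[OF l, of s] by (simp add: policy_of_def)
  show ?thesis
  proof (rule eq_iff_diff_eq_0[THEN iffD2], rule discounted_fixpoint_eq_zero[OF \<pi>])
    fix s'
    have "row_sum l s' = xi s' + \<gamma> * (\<Sum>s\<in>UNIV. \<Sum>a\<in>UNIV. row_sum l s * ?\<pi> $ (s, a) * P a s s')"
      by (subst occ_polytope_row_sum[OF l]) (simp add: l_eq[symmetric] mult.commute)
    then show "state_occupancy ?\<pi> s' - row_sum l s' =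
        \<gamma> * (\<Sum>s\<in>UNIV. \<Sum>a\<in>UNIV. (state_occupancy ?\<pi> s - row_sum l s) * ?\<pi> $ (s, a) * P a s s')"
      by (subst state_occupancy_bellman[OF \<pi>]) (simp add: algebra_simps sum_subtractf)
  qed
qed

lemma occupancy_policy_of:
  assumes l: "l \<in> occ_polytope P xi \<gamma>" shows "occupancy P xi \<gamma> (policy_of l) = l"
proof (rule vec_eq_iff[THEN iffD2], rule allI)
  fix i :: "'s \<times> 'a"
  show "occupancy P xi \<gamma> (policy_of l) $ i = l $ i"
    using row_sum_pos[OF l, of "fst i"]
    by (cases i) (simp add: occupancy_eq[OF policy_of_in_policies[OF l]]
        state_occupancy_policy_of[OF l], simp add: policy_of_def)
qed

definition mixture_weight :: "real \<Rightarrow> real^('s \<times> 'a) \<Rightarrow> real^('s \<times> 'a) \<Rightarrow> 's \<Rightarrow> real" where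
  "mixture_weight \<alpha> \<pi> \<pi>' s =
    state_occupancy \<pi>' s / ((1 - \<alpha>) * state_occupancy \<pi> s + \<alpha> * state_occupancy \<pi>' s)"

lemma mixture_denominator_ge_xi:
  assumes "\<pi> \<in> policies" "\<pi>' \<in> policies" "0 \<le> \<alpha>" "\<alpha> \<le> 1"
  shows "xi s \<le> (1 - \<alpha>) * state_occupancy \<pi> s + \<alpha> * state_occupancy \<pi>' s"
proof -
  have "(1 - \<alpha>) * xi s \<le> (1 - \<alpha>) * state_occupancy \<pi> s" "\<alpha> * xi s \<le> \<alpha> * state_occupancy \<pi>' s"
    using assms state_occupancy_ge_xi by (auto intro: mult_left_mono)
  then show ?thesis by (simp add: algebra_simps)
qed

lemma mixture_weight_bounds:
  assumes "\<pi> \<in> policies" "\<pi>' \<in> policies" "0 \<le> \<alpha>" "\<alpha> \<le> 1"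
  shows "0 \<le> mixture_weight \<alpha> \<pi> \<pi>' s" "mixture_weight \<alpha> \<pi> \<pi>' s \<le> state_occupancy \<pi>' s / xi s"
  using mixture_denominator_ge_xi[OF assms, of s] xi_pos[of s] state_occupancy_nonneg[OF assms(2), of s]
  unfolding mixture_weight_def by (auto intro: divide_nonneg_pos divide_left_mono)

definition mixture_direction :: "real \<Rightarrow> real^('s \<times> 'a) \<Rightarrow> real^('s \<times> 'a) \<Rightarrow> real^('s \<times> 'a)" where
  "mixture_direction \<alpha> \<pi> \<pi>' = (\<chi> i. mixture_weight \<alpha> \<pi> \<pi>' (fst i) * (\<pi>' $ i - \<pi> $ i))"

lemma policy_of_mixture:
  assumes \<pi>: "\<pi> \<in> policies" and \<pi>': "\<pi>' \<in> policies" and \<alpha>: "0 \<le> \<alpha>" "\<alpha> \<le> 1"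
  shows "policy_of ((1 - \<alpha>) *\<^sub>R occupancy P xi \<gamma> \<pi> + \<alpha> *\<^sub>R occupancy P xi \<gamma> \<pi>')
    = \<pi> + \<alpha> *\<^sub>R mixture_direction \<alpha> \<pi> \<pi>'"
proof (rule vec_eq_iff[THEN iffD2], rule allI)
  fix i :: "'s \<times> 'a"
  obtain s a where i: "i = (s, a)" by (cases i)
  define D where "D = (1 - \<alpha>) * state_occupancy \<pi> s + \<alpha> * state_occupancy \<pi>' s"
  define l where "l = (1 - \<alpha>) *\<^sub>R occupancy P xi \<gamma> \<pi> + \<alpha> *\<^sub>R occupancy P xi \<gamma> \<pi>'"
  have D: "D \<noteq> 0"
    using mixture_denominator_ge_xi[OF assms, of s] xi_pos[of s] by (simp add: D_def)
  have l: "l $ (s, b) = (1 - \<alpha>) * (state_occupancy \<pi> s * \<pi> $ (s, b))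
      + \<alpha> * (state_occupancy \<pi>' s * \<pi>' $ (s, b))" for b
    by (simp add: l_def occupancy_eq[OF \<pi>] occupancy_eq[OF \<pi>'])
  have "row_sum l s = D"
    using policies_row_sum[OF \<pi>, of s] policies_row_sum[OF \<pi>', of s]
    by (simp add: row_sum_def l D_def sum.distrib sum_distrib_left[symmetric])
  then have "policy_of l $ (s, a) = \<pi> $ (s, a) + \<alpha> * (state_occupancy \<pi>' s / D * (\<pi>' $ (s, a) - \<pi> $ (s, a)))"
    using D by (simp add: policy_of_def l field_simps) (simp add: D_def algebra_simps)
  then show "policy_of l $ i = (\<pi> + \<alpha> *\<^sub>R mixture_direction \<alpha> \<pi> \<pi>') $ i"
    by (simp add: i mixture_direction_def mixture_weight_def D_def)
qed

lemma mixture_step: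
  assumes \<pi>: "\<pi> \<in> policies" and \<pi>': "\<pi>' \<in> policies" and \<alpha>: "0 \<le> \<alpha>" "\<alpha> \<le> 1"
  shows "\<pi> + \<alpha> *\<^sub>R mixture_direction \<alpha> \<pi> \<pi>' \<in> policies"
    and "occupancy P xi \<gamma> (\<pi> + \<alpha> *\<^sub>R mixture_direction \<alpha> \<pi> \<pi>')
      = (1 - \<alpha>) *\<^sub>R occupancy P xi \<gamma> \<pi> + \<alpha> *\<^sub>R occupancy P xi \<gamma> \<pi>'"
proof -
  have l: "(1 - \<alpha>) *\<^sub>R occupancy P xi \<gamma> \<pi> + \<alpha> *\<^sub>R occupancy P xi \<gamma> \<pi>' \<in> occ_polytope P xi \<gamma>"
    using \<alpha> by (intro convexD_alt convex_occ_polytope occupancy_in_occ_polytope \<pi> \<pi>') auto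
  show "\<pi> + \<alpha> *\<^sub>R mixture_direction \<alpha> \<pi> \<pi>' \<in> policies"
    using policy_of_in_policies[OF l] policy_of_mixture[OF assms] by simp
  show "occupancy P xi \<gamma> (\<pi> + \<alpha> *\<^sub>R mixture_direction \<alpha> \<pi> \<pi>')
      = (1 - \<alpha>) *\<^sub>R occupancy P xi \<gamma> \<pi> + \<alpha> *\<^sub>R occupancy P xi \<gamma> \<pi>'"
    using occupancy_policy_of[OF l] policy_of_mixture[OF assms] by simp
qed

lemma gradient_domination:
  fixes F :: "real^('s \<times> 'a) \<Rightarrow> real"
  assumes F: "occ_polytope P xi \<gamma> \<subseteq> U" "concave_on U F"
    and der: "((\<lambda>p. F (occupancy P xi \<gamma> p)) has_derivative (\<lambda>h. g \<bullet> h)) (at \<pi> within policies)"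
    and \<pi>: "\<pi> \<in> policies" and \<pi>': "\<pi>' \<in> policies"
    and B: "\<And>q. q \<in> policies \<Longrightarrow> g \<bullet> (q - \<pi>) \<le> B"
    and C: "\<And>s. state_occupancy \<pi>' s / xi s \<le> C"
  shows "F (occupancy P xi \<gamma> \<pi>') - F (occupancy P xi \<gamma> \<pi>) \<le> C * B"
proof (rule derivative_bound_from_scaled_directions[OF der])
  \<comment> \<open>Along the policy curve \<open>\<pi> + \<alpha> w\<close> that realises the occupancy segment, \<open>F\<close> is concave, and
    the direction \<open>w\<close> rescales \<open>\<pi>' - \<pi>\<close> statewise by weights in \<open>[0, C]\<close>.\<close>
  have "0 \<le> state_occupancy \<pi>' s / xi s" for s
    using state_occupancy_nonneg[OF \<pi>'] xi_pos by (simp add: less_imp_le)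
  then have "0 \<le> C" using C order.trans by blast
  then show "0 \<le> C * real CARD('s \<times> 'a)" by simp
  fix \<alpha> :: real assume \<alpha>: "0 < \<alpha>" "\<alpha> \<le> 1"
  let ?w = "mixture_direction \<alpha> \<pi> \<pi>'"
  have weight: "0 \<le> mixture_weight \<alpha> \<pi> \<pi>' s" "mixture_weight \<alpha> \<pi> \<pi>' s \<le> C" for s
    using mixture_weight_bounds[OF \<pi> \<pi>', of \<alpha> s] C[of s] \<alpha> by auto
  have norm_w: "norm ?w \<le> C * real CARD('s \<times> 'a)"
    unfolding mixture_direction_def by (rule norm_scaled_policy_diff_le[OF \<pi> \<pi>' weight])
  have inner_w: "g \<bullet> ?w \<le> C * B"
    unfolding mixture_direction_def by (rule inner_scaled_policy_diff_le[OF \<pi> \<pi>' weight B])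
  note step = mixture_step[OF \<pi> \<pi>' less_imp_le[OF \<alpha>(1)] \<alpha>(2)]
  have "(1 - \<alpha>) * F (occupancy P xi \<gamma> \<pi>) + \<alpha> * F (occupancy P xi \<gamma> \<pi>')
      \<le> F (occupancy P xi \<gamma> (\<pi> + \<alpha> *\<^sub>R ?w))"
    unfolding step(2) using \<alpha> F(1) occupancy_in_occ_polytope[OF \<pi>] occupancy_in_occ_polytope[OF \<pi>']
    by (intro concave_onD[OF F(2)]) auto
  then have gain: "\<alpha> * (F (occupancy P xi \<gamma> \<pi>') - F (occupancy P xi \<gamma> \<pi>))
      \<le> F (occupancy P xi \<gamma> (\<pi> + \<alpha> *\<^sub>R ?w)) - F (occupancy P xi \<gamma> \<pi>)"
    by (simp add: algebra_simps)
  show "\<exists>w. \<pi> + \<alpha> *\<^sub>R w \<in> policies \<and> norm w \<le> C * real CARD('s \<times> 'a) \<and> g \<bullet> w \<le> C * B \<and>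
      \<alpha> * (F (occupancy P xi \<gamma> \<pi>') - F (occupancy P xi \<gamma> \<pi>))
        \<le> F (occupancy P xi \<gamma> (\<pi> + \<alpha> *\<^sub>R w)) - F (occupancy P xi \<gamma> \<pi>)"
    by (rule exI[of _ ?w]) (intro conjI step(1) norm_w inner_w gain)
qed

end

theorem theorem5:
  fixes P :: "'a::finite \<Rightarrow> 's::finite \<Rightarrow> 's \<Rightarrow> real"
    and xi :: "'s \<Rightarrow> real" and \<gamma> :: real
    and F :: "real^('s \<times> 'a) \<Rightarrow> real"
    and gradR :: "real^('s \<times> 'a) \<Rightarrow> real^('s \<times> 'a)"
    and L :: real
    and pistar :: "real^('s \<times> 'a)"
    and pis :: "nat \<Rightarrow> real^('s \<times> 'a)"
    and k :: nat
  assumes P_nonneg: "\<And>a s s'. 0 \<le> P a s s'"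
    and P_stoch: "\<And>a s. (\<Sum>s'\<in>UNIV. P a s s') = 1"
    and xi_pos: "\<And>s. 0 < xi s"
    and xi_sum: "(\<Sum>s\<in>UNIV. xi s) = 1"
    and gamma: "0 < \<gamma>" "\<gamma> < 1"
    and F_concave: "\<exists>U. open U \<and> occ_polytope P xi \<gamma> \<subseteq> U \<and> concave_on U F"
    and R_grad: "\<And>\<pi>. \<pi> \<in> policies \<Longrightarrow>
       ((\<lambda>p. F (occupancy P xi \<gamma> p)) has_derivative (\<lambda>h. gradR \<pi> \<bullet> h)) (at \<pi> within policies)"
    and L_pos: "0 < L"
    and grad_lip: "L-lipschitz_on policies gradR"
    and pistar_in: "pistar \<in> policies"
    and pistar_max: "\<And>\<pi>. \<pi> \<in> policies \<Longrightarrow> F (occupancy P xi \<gamma> \<pi>) \<le> F (occupancy P xi \<gamma> pistar)"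
    and pis0: "pis 0 \<in> policies"
    and pis_step: "\<And>n. pis (Suc n) = closest_point policies (pis n + (1 / L) *\<^sub>R gradR (pis n))"
    and k: "1 \<le> k"
  shows "F (occupancy P xi \<gamma> pistar) - F (occupancy P xi \<gamma> (pis k))
     \<le> 20 * L * real CARD('s) / ((1 - \<gamma>)^2 * real (k + 1))
        * (Max (range (\<lambda>s. \<bar>visitation P xi \<gamma> pistar s / xi s\<bar>)))^2"
proof -
  interpret mdp P xi \<gamma>
    using P_nonneg P_stoch xi_pos xi_sum gamma by unfold_locales auto
  obtain U where U: "occ_polytope P xi \<gamma> \<subseteq> U" "concave_on U F" using F_concave by blast
  define Mx where "Mx = Max (range (\<lambda>s. \<bar>visitation P xi \<gamma> pistar s / xi s\<bar>))"
  define C where "C = Mx / (1 - \<gamma>)"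
  have ratio: "state_occupancy pistar s / xi s \<le> C" for s
    unfolding C_def Mx_def by (rule state_occupancy_ratio_le)
  have "1 \<le> C"
    using ratio[of undefined] state_occupancy_ge_xi[OF pistar_in] xi_pos[of undefined]
    by (smt (verit) le_divide_eq_1_pos)
  moreover have "F (occupancy P xi \<gamma> pistar) - F (occupancy P xi \<gamma> \<pi>) \<le> C * B"
    if "\<pi> \<in> policies" "\<And>q. q \<in> policies \<Longrightarrow> gradR \<pi> \<bullet> (q - \<pi>) \<le> B" for \<pi> B
    using gradient_domination[OF U R_grad[OF that(1)] that(1) pistar_in that(2) ratio] .
  ultimately have "F (occupancy P xi \<gamma> pistar) - F (occupancy P xi \<gamma> (pis k))
      \<le> 10 * L * (sqrt (2 * real CARD('s)))^2 * C^2 / (real k + 1)"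
    by (intro projected_gradient_ascent_rate[OF convex_policies closed_policies R_grad grad_lip L_pos
          policies_diameter _ pistar_max _ _ pis0 pis_step k]) auto
  also have "\<dots> = 20 * L * real CARD('s) / ((1 - \<gamma>)^2 * real (k + 1)) * Mx^2"
    using gamma by (simp add: C_def power_divide field_simps)
  finally show ?thesis unfolding Mx_def .
qed

end
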